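(* For every instance $(A,C,k)$, the committee produced by MES completed by varying the budget and then by AV has representation ratio at least $\frac1k$ and utilitarian ratio at least $\frac{2}{\sqrt{k}}-\frac2k$. Both bounds are asymptotically tight: there is an absolute constant $K>0$ such that for infinitely many $k$ there are instances with committee size $k$ on which this procedure (for some tie-breaking) yields a committee with representation ratio at most $K/k$, and instances on which it yields a committee with utilitarian ratio at most $K/\sqrt{k}$.
   Context: An instance $(A,C,k)$ consists of a finite nonempty candidate set $C$, voters $N=\{1,\dots,n\}$, approval sets $A_i\subseteq C$, and a committee size $1\le k\le|C|$. $N_c=\{i:c\in A_i\}$. $\mathrm{sw}(W)=\sum_i|A_i\cap W|$, $\mathrm{cov}(W)=|\{i:A_i\cap W\ne\emptyset\}|$; utilitarian ratio $\mathrm{sw}(W)/\max\{\mathrm{sw}(W'):|W'|=k\}$, representation ratio $\mathrm{cov}(W)/\max\{\mathrm{cov}(W'):|W'|=k\}$. For a positive integer $k'$, MES with parameter $k'$ starts with $W=\emptyset$ and budgets $b_i=k'/n$; in each round, for each $c\notin W$ it finds $\rho\ge0$ (if any) with $\sum_{i\in N_c}\min(b_i,\rho)=1$; if none exists for any unselected candidate it outputs $W$, otherwise it adds a $c$ with minimum $\rho$ and sets $b_i\leftarrow b_i-\min(b_i,\rho)$ for $i\in N_c$. Completion by varying the budget: let $k^*$ be the smallest integer $k'\ge k$ for which MES with parameter $k'$ selects at least $k$ candidates; if it selects exactly $k$, let $W$ be that committee, otherwise let $W$ be the output of MES with parameter $k^*-1$. Finally $W$ is completed by AV: output $W\cup T$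 with $T\subseteq C\setminus W$, $|T|=k-|W|$, maximizing $\sum_{c\in T}|N_c|$. *)

theory Defs
  imports Complex_Main
begin

definition voters :: "nat \<Rightarrow> nat set" where
  "voters n = {1..n}"

definition supporters :: "(nat \<Rightarrow> 'c set) \<Rightarrow> nat \<Rightarrow> 'c \<Rightarrow> nat set" where
  "supporters A n c = {i \<in> voters n. c \<in> A i}"

definition valid_instance :: "(nat \<Rightarrow> 'c set) \<Rightarrow> 'c set \<Rightarrow> nat \<Rightarrow> nat \<Rightarrow> bool" where
  "valid_instance A C n k \<longleftrightarrow> finite C \<and> C \<noteq> {} \<and> 1 \<le> n \<and>
     (\<forall>i \<in> voters n. A i \<subseteq> C) \<and> 1 \<le> k \<and> k \<le> card C"

definition sw :: "(nat \<Rightarrow> 'c set) \<Rightarrow> nat \<Rightarrow> 'c set \<Rightarrow> nat" where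
  "sw A n W = (\<Sum>i\<in>voters n. card (A i \<inter> W))"

definition cov :: "(nat \<Rightarrow> 'c set) \<Rightarrow> nat \<Rightarrow> 'c set \<Rightarrow> nat" where
  "cov A n W = card {i \<in> voters n. A i \<inter> W \<noteq> {}}"

definition max_sw :: "(nat \<Rightarrow> 'c set) \<Rightarrow> 'c set \<Rightarrow> nat \<Rightarrow> nat \<Rightarrow> nat" where
  "max_sw A C n k = Max {sw A n W' | W'. W' \<subseteq> C \<and> card W' = k}"

definition max_cov :: "(nat \<Rightarrow> 'c set) \<Rightarrow> 'c set \<Rightarrow> nat \<Rightarrow> nat \<Rightarrow> nat" where
  "max_cov A C n k = Max {cov A n W' | W'. W' \<subseteq> C \<and> card W' = k}"

definition util_ratio :: "(nat \<Rightarrow> 'c set) \<Rightarrow> 'c set \<Rightarrow> nat \<Rightarrow> nat \<Rightarrow> 'c set \<Rightarrow> real" where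
  "util_ratio A C n k W = real (sw A n W) / real (max_sw A C n k)"

definition repr_ratio :: "(nat \<Rightarrow> 'c set) \<Rightarrow> 'c set \<Rightarrow> nat \<Rightarrow> nat \<Rightarrow> 'c set \<Rightarrow> real" where
  "repr_ratio A C n k W = real (cov A n W) / real (max_cov A C n k)"

definition pay_sum :: "(nat \<Rightarrow> 'c set) \<Rightarrow> nat \<Rightarrow> (nat \<Rightarrow> real) \<Rightarrow> 'c \<Rightarrow> real \<Rightarrow> real" where
  "pay_sum A n b c \<rho> = (\<Sum>i\<in>supporters A n c. min (b i) \<rho>)"

definition affordable :: "(nat \<Rightarrow> 'c set) \<Rightarrow> nat \<Rightarrow> (nat \<Rightarrow> real) \<Rightarrow> 'c \<Rightarrow> bool" where
  "affordable A n b c \<longleftrightarrow> (\<exists>\<rho>\<ge>0. pay_sum A n b c \<rho> = 1)"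

definition rho :: "(nat \<Rightarrow> 'c set) \<Rightarrow> nat \<Rightarrow> (nat \<Rightarrow> real) \<Rightarrow> 'c \<Rightarrow> real" where
  "rho A n b c = Inf {\<rho>. \<rho> \<ge> 0 \<and> pay_sum A n b c \<rho> = 1}"

definition affordable_cands ::
  "(nat \<Rightarrow> 'c set) \<Rightarrow> 'c set \<Rightarrow> nat \<Rightarrow> 'c set \<Rightarrow> (nat \<Rightarrow> real) \<Rightarrow> 'c set" where
  "affordable_cands A C n W b = {c \<in> C - W. affordable A n b c}"

definition best_cands ::
  "(nat \<Rightarrow> 'c set) \<Rightarrow> 'c set \<Rightarrow> nat \<Rightarrow> 'c set \<Rightarrow> (nat \<Rightarrow> real) \<Rightarrow> 'c set" where
  "best_cands A C n W b = {c \<in> affordable_cands A C n W b.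
      \<forall>d \<in> affordable_cands A C n W b. rho A n b c \<le> rho A n b d}"

text \<open>A tie-breaking rule: given the parameter k', the current state and the nonempty set of
  tied candidates (those of minimum rho), it picks one of them.\<close>
type_synonym 'c tiebreak = "nat \<Rightarrow> 'c set \<Rightarrow> (nat \<Rightarrow> real) \<Rightarrow> 'c set \<Rightarrow> 'c"

definition valid_tiebreak :: "'c tiebreak \<Rightarrow> bool" where
  "valid_tiebreak tb \<longleftrightarrow> (\<forall>k' W b S. S \<noteq> {} \<longrightarrow> tb k' W b S \<in> S)"

definition mes_step ::
  "(nat \<Rightarrow> 'c set) \<Rightarrow> 'c set \<Rightarrow> nat \<Rightarrow> 'c tiebreak \<Rightarrow> nat \<Rightarrow>
   'c set \<times> (nat \<Rightarrow> real) \<Rightarrow> ('c set \<times> (nat \<Rightarrow> real)) option" where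
  "mes_step A C n tb k' s =
     (let W = fst s; b = snd s; S = best_cands A C n W b in
      if S = {} then None
      else (let c = tb k' W b S; r = rho A n b c in
            Some (insert c W,
                  (\<lambda>i. if i \<in> supporters A n c then b i - min (b i) r else b i))))"

fun mes_iter ::
  "(nat \<Rightarrow> 'c set) \<Rightarrow> 'c set \<Rightarrow> nat \<Rightarrow> 'c tiebreak \<Rightarrow> nat \<Rightarrow> nat \<Rightarrow>
   'c set \<times> (nat \<Rightarrow> real) \<Rightarrow> 'c set \<times> (nat \<Rightarrow> real)" where
  "mes_iter A C n tb k' 0 s = s"
| "mes_iter A C n tb k' (Suc m) s =
     (case mes_step A C n tb k' s of None \<Rightarrow> s | Some s' \<Rightarrow> mes_iter A C n tb k' m s')"

text \<open>MES with parameter k' (initial budgets k'/n). Every round adds a new candidate of C,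
  so card C rounds suffice for the procedure to terminate.\<close>
definition mes :: "(nat \<Rightarrow> 'c set) \<Rightarrow> 'c set \<Rightarrow> nat \<Rightarrow> 'c tiebreak \<Rightarrow> nat \<Rightarrow> 'c set" where
  "mes A C n tb k' = fst (mes_iter A C n tb k' (card C) ({}, (\<lambda>i. real k' / real n)))"

text \<open>If no parameter k' \<ge> k makes MES select at least k
  candidates, we take W = {} (the final AV completion then contains all approved candidates
  regardless of the choice of W).\<close>
definition mes_vb :: "(nat \<Rightarrow> 'c set) \<Rightarrow> 'c set \<Rightarrow> nat \<Rightarrow> 'c tiebreak \<Rightarrow> nat \<Rightarrow> 'c set" where
  "mes_vb A C n tb k =
     (if \<exists>k'\<ge>k. card (mes A C n tb k') \<ge> k then
        (let ks = (LEAST k'. k' \<ge> k \<and> card (mes A C n tb k') \<ge> k) in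
         if card (mes A C n tb ks) = k then mes A C n tb ks else mes A C n tb (ks - 1))
      else {})"

definition av_score :: "(nat \<Rightarrow> 'c set) \<Rightarrow> nat \<Rightarrow> 'c set \<Rightarrow> nat" where
  "av_score A n T = (\<Sum>c\<in>T. card (supporters A n c))"

definition av_completions :: "(nat \<Rightarrow> 'c set) \<Rightarrow> 'c set \<Rightarrow> nat \<Rightarrow> nat \<Rightarrow> 'c set \<Rightarrow> 'c set set" where
  "av_completions A C n k W =
     {W \<union> T | T. T \<subseteq> C - W \<and> card T = k - card W \<and>
        (\<forall>T'. T' \<subseteq> C - W \<and> card T' = k - card W \<longrightarrow> av_score A n T' \<le> av_score A n T)}"

definition mes_vb_av_outputs :: "(nat \<Rightarrow> 'c set) \<Rightarrow> 'c set \<Rightarrow> nat \<Rightarrow> nat \<Rightarrow> 'c set set" where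
  "mes_vb_av_outputs A C n k =
     (\<Union>tb \<in> {tb. valid_tiebreak tb}. av_completions A C n k (mes_vb A C n tb k))"

end

theory Submission
  imports Defs "HOL-Analysis.Elementary_Metric_Spaces"
begin

text \<open>Run MES with parameter \<open>k'\<close>, so that every voter starts with \<open>\<beta> = k' / n\<close>. A selected
  candidate costs 1 and thus has at least \<open>1 / \<beta>\<close> supporters. For an unselected candidate \<open>c\<close>
  with \<open>s\<close> supporters, look at the phase in which all of them still hold \<open>1 / s\<close>: meanwhile \<open>c\<close>
  is affordable at price \<open>1 / s\<close>, so every candidate bought has at least \<open>s\<close> supporters and
  charges each of them at most \<open>1 / s\<close>. At the end \<open>c\<close> is unaffordable, so some supporter has
  dropped below \<open>1 / s\<close> and has therefore paid for more than \<open>s * \<beta> - 1\<close> such candidates.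
  Both facts survive the completion by varying the budget, and they are all the bounds need:
  a member of the final committee is as popular as the most popular candidate, which gives
  \<open>1 / k\<close> for coverage; for welfare, an exchange argument against the AV completion leaves an
  inequality quadratic in \<open>s * \<beta>\<close>, whose worst case is \<open>2 / sqrt k - 2 / k\<close>.

  Tightness: \<open>p\<close> clones approved by voters \<open>1..g\<close> compete with singletons approved by one
  voter each. MES buys at most \<open>g * \<beta>\<close> clones, while the AV completion prefers clones.\<close>

abbreviation score :: "(nat \<Rightarrow> 'c set) \<Rightarrow> nat \<Rightarrow> 'c \<Rightarrow> nat" where
  "score A n c \<equiv> card (supporters A n c)"

lemma finite_voters [simp]: "finite (voters n)"
  by (simp add: voters_def)

lemma supporters_subset_voters: "supporters A n c \<subseteq> voters n"
  by (auto simp: supporters_def)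

lemma finite_supporters [simp]: "finite (supporters A n c)"
  using finite_subset[OF supporters_subset_voters] by simp

lemma pay_sum_le_score: "0 \<le> \<rho> \<Longrightarrow> pay_sum A n b c \<rho> \<le> real (score A n c) * \<rho>"
  unfolding pay_sum_def by (rule sum_bounded_above) simp

lemma pay_sum_le_budget: "pay_sum A n b c \<rho> \<le> (\<Sum>i\<in>supporters A n c. b i)"
  unfolding pay_sum_def by (intro sum_mono) simp

lemma continuous_on_pay_sum: "continuous_on S (\<lambda>\<rho>. pay_sum A n b c \<rho>)"
  unfolding pay_sum_def by (intro continuous_intros)

lemma
  assumes "affordable A n b c"
  shows rho_nonneg: "0 \<le> rho A n b c" and pay_sum_rho: "pay_sum A n b c (rho A n b c) = 1"
proof -
  let ?S = "{\<rho>. 0 \<le> \<rho> \<and> pay_sum A n b c \<rho> = 1}"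
  have "closed ?S"
    by (intro closed_Collect_conj closed_Collect_le closed_Collect_eq continuous_on_pay_sum
        continuous_intros)
  moreover have "?S \<noteq> {}"
    using assms unfolding affordable_def by auto
  ultimately have "Inf ?S \<in> ?S"
    by (intro closed_contains_Inf) (auto intro: bdd_belowI[of _ 0])
  then show "0 \<le> rho A n b c" "pay_sum A n b c (rho A n b c) = 1"
    unfolding rho_def by auto
qed

lemma rho_le: "0 \<le> \<rho> \<Longrightarrow> pay_sum A n b c \<rho> = 1 \<Longrightarrow> rho A n b c \<le> \<rho>"
  unfolding rho_def by (rule cInf_lower) (auto intro: bdd_belowI[of _ 0])

lemma score_mult_rho_ge_1: "affordable A n b c \<Longrightarrow> 1 \<le> real (score A n c) * rho A n b c"
  using pay_sum_le_score[OF rho_nonneg] pay_sum_rho by metis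

lemma affordable_iff_budget_ge_1:
  assumes "\<And>i. 0 \<le> b i"
  shows "affordable A n b c \<longleftrightarrow> 1 \<le> (\<Sum>i\<in>supporters A n c. b i)"
proof
  assume "affordable A n b c"
  then show "1 \<le> (\<Sum>i\<in>supporters A n c. b i)"
    using pay_sum_le_budget pay_sum_rho by metis
next
  let ?M = "\<Sum>i\<in>supporters A n c. b i"
  assume "1 \<le> ?M"
  moreover have "pay_sum A n b c 0 = 0"
    unfolding pay_sum_def using assms by (simp add: min_absorb2)
  moreover have "pay_sum A n b c ?M = ?M"
    unfolding pay_sum_def using assms by (intro sum.cong refl min_absorb1) (auto intro: member_le_sum)
  ultimately have "\<exists>\<rho>\<ge>0. \<rho> \<le> ?M \<and> pay_sum A n b c \<rho> = 1"
    by (intro IVT' continuous_on_pay_sum) auto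
  then show "affordable A n b c"
    unfolding affordable_def by auto
qed

lemma
  assumes "supporters A n c \<noteq> {}" "\<And>i. i \<in> supporters A n c \<Longrightarrow> 1 / real (score A n c) \<le> b i"
  shows affordable_if_equal_shares: "affordable A n b c"
    and rho_le_equal_share: "rho A n b c \<le> 1 / real (score A n c)"
proof -
  have "pay_sum A n b c (1 / real (score A n c)) = (\<Sum>i\<in>supporters A n c. 1 / real (score A n c))"
    unfolding pay_sum_def using assms(2) by (intro sum.cong) auto
  also have "\<dots> = 1"
    using assms(1) by simp
  finally have pay: "pay_sum A n b c (1 / real (score A n c)) = 1" .
  then show "affordable A n b c"
    unfolding affordable_def by (intro exI[of _ "1 / real (score A n c)"]) simp
  show "rho A n b c \<le> 1 / real (score A n c)"
    using rho_le[OF _ pay] by simp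
qed

definition charge :: "(nat \<Rightarrow> 'c set) \<Rightarrow> nat \<Rightarrow> (nat \<Rightarrow> real) \<Rightarrow> 'c \<Rightarrow> nat \<Rightarrow> real" where
  "charge A n b d i = (if i \<in> supporters A n d then b i - min (b i) (rho A n b d) else b i)"

lemma mes_step_SomeE:
  assumes "valid_tiebreak tb" "mes_step A C n tb k' s = Some s'"
  obtains d where "d \<in> best_cands A C n (fst s) (snd s)"
    "s' = (insert d (fst s), charge A n (snd s) d)"
proof -
  let ?S = "best_cands A C n (fst s) (snd s)"
  let ?d = "tb k' (fst s) (snd s) ?S"
  have "?S \<noteq> {}"
    using assms(2) unfolding mes_step_def Let_def by (auto split: if_splits)
  then have "?d \<in> ?S" "s' = (insert ?d (fst s), charge A n (snd s) ?d)"
    using assms unfolding valid_tiebreak_def mes_step_def Let_def charge_def by auto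
  then show thesis
    by (rule that)
qed

lemma mes_step_None_iff: "mes_step A C n tb k' s = None \<longleftrightarrow> best_cands A C n (fst s) (snd s) = {}"
  unfolding mes_step_def Let_def by auto

lemma best_candsD:
  assumes "d \<in> best_cands A C n W b"
  shows "d \<in> C" "d \<notin> W" "affordable A n b d"
    "\<And>e. e \<in> C \<Longrightarrow> e \<notin> W \<Longrightarrow> affordable A n b e \<Longrightarrow> rho A n b d \<le> rho A n b e"
  using assms unfolding best_cands_def affordable_cands_def by auto

lemma not_affordable_if_best_cands_empty:
  assumes "finite C" "best_cands A C n W b = {}" "c \<in> C - W"
  shows "\<not> affordable A n b c"
proof
  assume "affordable A n b c"
  then have "affordable_cands A C n W b \<noteq> {}"
    using assms(3) unfolding affordable_cands_def by auto
  moreover have "finite (affordable_cands A C n W b)"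
    using assms(1) unfolding affordable_cands_def by auto
  ultimately obtain x where "is_arg_min (rho A n b) (\<lambda>x. x \<in> affordable_cands A C n W b) x"
    using ex_is_arg_min_if_finite by blast
  then have "x \<in> best_cands A C n W b"
    unfolding is_arg_min_def best_cands_def by force
  then show False
    using assms(2) by auto
qed

lemma mes_iter_invariant:
  assumes "P s" "\<And>s s'. P s \<Longrightarrow> mes_step A C n tb k' s = Some s' \<Longrightarrow> P s'"
  shows "P (mes_iter A C n tb k' m s)"
  using assms(1) by (induction m arbitrary: s) (auto split: option.split intro: assms(2))

lemma mes_iter_stops:
  assumes "valid_tiebreak tb" "finite C" "fst s \<subseteq> C" "card C - card (fst s) \<le> m"
  shows "best_cands A C n (fst (mes_iter A C n tb k' m s)) (snd (mes_iter A C n tb k' m s)) = {}"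
  using assms(3,4)
proof (induction m arbitrary: s)
  case 0
  then have "fst s = C"
    using assms(2) by (metis card_seteq diff_is_0_eq le_zero_eq)
  then show ?case
    unfolding best_cands_def affordable_cands_def by simp
next
  case (Suc m)
  show ?case
  proof (cases "mes_step A C n tb k' s")
    case None
    then show ?thesis
      using mes_step_None_iff[of A C n tb k' s] by simp
  next
    case (Some s')
    then obtain d where d: "d \<in> best_cands A C n (fst s) (snd s)"
      "s' = (insert d (fst s), charge A n (snd s) d)"
      using mes_step_SomeE[OF assms(1)] by metis
    have "finite (fst s)"
      using Suc.prems(1) assms(2) by (rule finite_subset)
    then have "card (fst s') = Suc (card (fst s))"
      using d best_candsD(2)[OF d(1)] by simp
    moreover have "fst s' \<subseteq> C"
      using d best_candsD(1)[OF d(1)] Suc.prems(1) by auto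
    ultimately show ?thesis
      using Suc.IH[of s'] Suc.prems(2) Some by simp
  qed
qed

definition closed_group :: "(nat \<Rightarrow> 'c set) \<Rightarrow> 'c set \<Rightarrow> nat \<Rightarrow> nat set \<Rightarrow> bool" where
  "closed_group A C n G \<longleftrightarrow> (\<forall>e\<in>C. supporters A n e \<subseteq> G \<or> supporters A n e \<inter> G = {})"

definition equal_shares_certified ::
  "(nat \<Rightarrow> 'c set) \<Rightarrow> 'c set \<Rightarrow> nat \<Rightarrow> nat \<Rightarrow> real \<Rightarrow> 'c set \<Rightarrow> bool" where
  "equal_shares_certified A C n k \<beta> W \<longleftrightarrow> W \<subseteq> C \<and> 0 \<le> \<beta> \<and> card W \<le> k \<and>
     (\<forall>d\<in>W. 1 \<le> real (score A n d) * \<beta>) \<and>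
     (\<forall>c\<in>C - W. real (score A n c) * \<beta> - 1 < real (card {d\<in>W. score A n c \<le> score A n d}))"

locale mes_run =
  fixes A :: "nat \<Rightarrow> 'c set" and C :: "'c set" and n :: nat and tb :: "'c tiebreak" and k' :: nat
  assumes valid_tb: "valid_tiebreak tb" and finite_C: "finite C"
begin

abbreviation \<beta> :: real where
  "\<beta> \<equiv> real k' / real n"

definition final_state :: "'c set \<times> (nat \<Rightarrow> real)" where
  "final_state = mes_iter A C n tb k' (card C) ({}, \<lambda>_. \<beta>)"

abbreviation committee :: "'c set" where
  "committee \<equiv> mes A C n tb k'"

abbreviation budget :: "nat \<Rightarrow> real" where
  "budget \<equiv> snd final_state"

lemma committee_eq: "committee = fst final_state"
  unfolding mes_def final_state_def ..

lemma final_state_invariant: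
  assumes "P ({}, \<lambda>_. \<beta>)" "\<And>s s'. P s \<Longrightarrow> mes_step A C n tb k' s = Some s' \<Longrightarrow> P s'"
  shows "P final_state"
  unfolding final_state_def using assms by (rule mes_iter_invariant)

lemma mes_stepE:
  assumes "mes_step A C n tb k' s = Some s'"
  obtains d where "d \<in> C" "d \<notin> fst s" "affordable A n (snd s) d"
    "\<And>e. e \<in> C \<Longrightarrow> e \<notin> fst s \<Longrightarrow> affordable A n (snd s) e \<Longrightarrow> rho A n (snd s) d \<le> rho A n (snd s) e"
    "fst s' = insert d (fst s)" "snd s' = charge A n (snd s) d"
proof -
  obtain d where d: "d \<in> best_cands A C n (fst s) (snd s)"
    "s' = (insert d (fst s), charge A n (snd s) d)"
    using mes_step_SomeE[OF valid_tb assms] .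
  show thesis
    by (rule that[of d]) (use best_candsD[OF d(1)] d(2) in auto)
qed

lemma not_affordable_final:
  assumes "c \<in> C - committee"
  shows "\<not> affordable A n budget c"
  using not_affordable_if_best_cands_empty[OF finite_C _ assms[unfolded committee_eq]]
    mes_iter_stops[OF valid_tb finite_C] unfolding final_state_def by simp

definition sound_state :: "'c set \<times> (nat \<Rightarrow> real) \<Rightarrow> bool" where
  "sound_state s \<longleftrightarrow> fst s \<subseteq> C \<and> (\<forall>i. 0 \<le> snd s i \<and> snd s i \<le> \<beta>) \<and>
     (\<forall>d\<in>fst s. 1 \<le> real (score A n d) * \<beta>)"

lemma sound_state_step:
  assumes "sound_state s" "mes_step A C n tb k' s = Some s'"
  shows "sound_state s'"
proof -
  obtain d where d: "d \<in> C" "affordable A n (snd s) d"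
    "fst s' = insert d (fst s)" "snd s' = charge A n (snd s) d"
    using mes_stepE[OF assms(2)] by metis
  have b: "0 \<le> snd s i" "snd s i \<le> \<beta>" for i
    using assms(1) unfolding sound_state_def by auto
  have "1 \<le> (\<Sum>i\<in>supporters A n d. snd s i)"
    using pay_sum_le_budget[of A n "snd s" d "rho A n (snd s) d"] pay_sum_rho[OF d(2)] by simp
  also have "\<dots> \<le> real (score A n d) * \<beta>"
    using b by (intro sum_bounded_above) auto
  finally have "1 \<le> real (score A n d) * \<beta>" .
  moreover have "0 \<le> snd s' i \<and> snd s' i \<le> \<beta>" for i
    using b[of i] rho_nonneg[OF d(2)] unfolding d(4) charge_def by auto
  ultimately show ?thesis
    using assms(1) d unfolding sound_state_def by auto
qed

lemma sound_state_finite: "sound_state s \<Longrightarrow> finite (fst s)"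
  unfolding sound_state_def using finite_C finite_subset by blast

lemma sound_final: "sound_state final_state"
proof (rule final_state_invariant)
  show "sound_state ({}, \<lambda>_. \<beta>)"
    by (simp add: sound_state_def)
qed (fact sound_state_step)

lemma committee_subset: "committee \<subseteq> C"
  using sound_final unfolding sound_state_def committee_eq by auto

lemma budget_nonneg: "0 \<le> budget i"
  using sound_final unfolding sound_state_def by auto

lemma committee_score: "d \<in> committee \<Longrightarrow> 1 \<le> real (score A n d) * \<beta>"
  using sound_final unfolding sound_state_def committee_eq by auto

lemma unselected_budget_lt_1: "c \<in> C - committee \<Longrightarrow> (\<Sum>i\<in>supporters A n c. budget i) < 1"
  using not_affordable_final affordable_iff_budget_ge_1[OF budget_nonneg] by force

lemma committee_grows: "mes_step A C n tb k' s = Some s' \<Longrightarrow> fst s \<subseteq> fst s'"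
  by (erule mes_stepE) auto

lemma group_budget_step:
  assumes "finite G" "closed_group A C n G" "sound_state s"
    and budget_eq: "(\<Sum>i\<in>G. snd s i) = real (card G) * \<beta> - real (card {e\<in>fst s. supporters A n e \<subseteq> G})"
    and step: "mes_step A C n tb k' s = Some s'"
  shows "(\<Sum>i\<in>G. snd s' i) = real (card G) * \<beta> - real (card {e\<in>fst s'. supporters A n e \<subseteq> G})"
proof -
  obtain d where d: "d \<in> C" "d \<notin> fst s" "affordable A n (snd s) d"
    "fst s' = insert d (fst s)" "snd s' = charge A n (snd s) d"
    using mes_stepE[OF step] by metis
  let ?pay = "\<lambda>i. min (snd s i) (rho A n (snd s) d)"
  have fin: "finite {e\<in>fst s. supporters A n e \<subseteq> G}"
    using sound_state_finite[OF assms(3)] by simp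
  have "(\<Sum>i\<in>G. snd s' i) = (\<Sum>i\<in>G. snd s i - (if i \<in> supporters A n d then ?pay i else 0))"
    unfolding d(5) charge_def by (intro sum.cong) auto
  also have "\<dots> = (\<Sum>i\<in>G. snd s i) - (\<Sum>i\<in>G \<inter> supporters A n d. ?pay i)"
    by (simp add: sum_subtractf sum.inter_restrict[OF assms(1)])
  finally have spent: "(\<Sum>i\<in>G. snd s' i) = (\<Sum>i\<in>G. snd s i) - (\<Sum>i\<in>G \<inter> supporters A n d. ?pay i)" .
  show ?thesis
  proof (cases "supporters A n d \<subseteq> G")
    case True
    then have "G \<inter> supporters A n d = supporters A n d"
      by auto
    moreover have "{e\<in>fst s'. supporters A n e \<subseteq> G} = insert d {e\<in>fst s. supporters A n e \<subseteq> G}"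
      using True d(4) by auto
    ultimately show ?thesis
      using spent budget_eq pay_sum_rho[OF d(3)] fin d(2) unfolding pay_sum_def by simp
  next
    case False
    then have "G \<inter> supporters A n d = {}"
      using assms(2) d(1) unfolding closed_group_def by auto
    moreover have "{e\<in>fst s'. supporters A n e \<subseteq> G} = {e\<in>fst s. supporters A n e \<subseteq> G}"
      using False d(4) by auto
    ultimately show ?thesis
      using spent budget_eq by simp
  qed
qed

lemma closed_group_budget:
  assumes "finite G" "closed_group A C n G"
  shows "(\<Sum>i\<in>G. budget i) = real (card G) * \<beta> - real (card {e\<in>committee. supporters A n e \<subseteq> G})"
proof -
  have "sound_state final_state \<and> (\<Sum>i\<in>G. snd final_state i) =
      real (card G) * \<beta> - real (card {e\<in>fst final_state. supporters A n e \<subseteq> G})"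
  proof (rule final_state_invariant)
    show "sound_state ({}, \<lambda>_. \<beta>) \<and> (\<Sum>i\<in>G. snd ({}, \<lambda>_. \<beta>) i) =
        real (card G) * \<beta> - real (card {e\<in>fst ({}, \<lambda>_. \<beta>). supporters A n e \<subseteq> G})"
      by (simp add: sound_state_def)
  qed (use sound_state_step group_budget_step[OF assms] in blast)
  then show ?thesis
    unfolding committee_eq by blast
qed

lemma closed_group_count_le:
  assumes "finite G" "closed_group A C n G"
  shows "real (card {e\<in>committee. supporters A n e \<subseteq> G}) \<le> real (card G) * \<beta>"
  using closed_group_budget[OF assms] sum_nonneg[of G budget] budget_nonneg by simp

lemma closed_group_count_gt:
  assumes "finite G" "closed_group A C n G" "c \<in> C - committee" "supporters A n c = G"
  shows "real (card G) * \<beta> - 1 < real (card {e\<in>committee. supporters A n e \<subseteq> G})"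
  using closed_group_budget[OF assms(1,2)] unselected_budget_lt_1[OF assms(3)] assms(4) by simp

lemma card_committee_le:
  assumes "1 \<le> n"
  shows "card committee \<le> k'"
proof -
  have "closed_group A C n (voters n)"
    unfolding closed_group_def by (simp add: supporters_subset_voters)
  moreover have "{e\<in>committee. supporters A n e \<subseteq> voters n} = committee"
    by (simp add: supporters_subset_voters)
  ultimately have "real (card committee) \<le> real (card (voters n)) * \<beta>"
    using closed_group_count_le[of "voters n"] by simp
  then show ?thesis
    using assms by (simp add: voters_def)
qed

text \<open>Invariant of the phase in which \<open>c\<close> is affordable at price \<open>1 / score c\<close>: every payment
  made so far was at most that price.\<close>
definition cheap_phase :: "'c \<Rightarrow> 'c set \<times> (nat \<Rightarrow> real) \<Rightarrow> bool" where
  "cheap_phase c s \<longleftrightarrow> (\<forall>d\<in>fst s. score A n c \<le> score A n d) \<and>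
     (\<forall>i\<in>supporters A n c.
        \<beta> - real (card {d\<in>fst s. i \<in> supporters A n d}) / real (score A n c) \<le> snd s i)"

definition threshold_inv :: "'c \<Rightarrow> 'c set \<times> (nat \<Rightarrow> real) \<Rightarrow> bool" where
  "threshold_inv c s \<longleftrightarrow> c \<in> fst s \<or>
     real (score A n c) * \<beta> - 1 < real (card {d\<in>fst s. score A n c \<le> score A n d}) \<or>
     cheap_phase c s"

lemma threshold_of_poor_supporter:
  assumes "finite (fst s)" "cheap_phase c s" "i \<in> supporters A n c"
    "snd s i < 1 / real (score A n c)"
  shows "real (score A n c) * \<beta> - 1 < real (card {d\<in>fst s. score A n c \<le> score A n d})"
proof -
  let ?s = "real (score A n c)" and ?m = "real (card {d\<in>fst s. i \<in> supporters A n d})"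
  have ne: "supporters A n c \<noteq> {}"
    using assms(3) by auto
  then have pos: "0 < ?s"
    by (simp add: card_gt_0_iff)
  have "?s * \<beta> - ?m = ?s * (\<beta> - ?m / ?s)"
    using ne by (simp add: right_diff_distrib)
  also have "\<dots> < ?s * (1 / ?s)"
    using assms(2-4) pos unfolding cheap_phase_def by (intro mult_strict_left_mono) fastforce+
  also have "\<dots> = 1"
    using ne by simp
  finally have "?s * \<beta> - ?m < 1" .
  moreover have "card {d\<in>fst s. i \<in> supporters A n d} \<le> card {d\<in>fst s. score A n c \<le> score A n d}"
    using assms(1,2) unfolding cheap_phase_def by (intro card_mono) auto
  ultimately show ?thesis
    by (smt (verit) of_nat_le_iff)
qed

lemma cheap_choice:
  assumes "c \<in> C" "c \<notin> fst s" "supporters A n c \<noteq> {}"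
    and rich: "\<forall>i\<in>supporters A n c. 1 / real (score A n c) \<le> snd s i"
    and step: "mes_step A C n tb k' s = Some s'"
  obtains d where "d \<notin> fst s" "score A n c \<le> score A n d"
    "rho A n (snd s) d \<le> 1 / real (score A n c)"
    "fst s' = insert d (fst s)" "snd s' = charge A n (snd s) d"
proof -
  let ?s = "real (score A n c)"
  obtain d where d: "d \<notin> fst s" "affordable A n (snd s) d"
    "rho A n (snd s) d \<le> rho A n (snd s) c"
    "fst s' = insert d (fst s)" "snd s' = charge A n (snd s) d"
    using mes_stepE[OF step] affordable_if_equal_shares[OF assms(3)] rich assms(1,2) by metis
  have cheap: "rho A n (snd s) d \<le> 1 / ?s"
    using d(3) rho_le_equal_share[OF assms(3)] rich by fastforce
  have "1 \<le> real (score A n d) * rho A n (snd s) d"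
    by (rule score_mult_rho_ge_1[OF d(2)])
  also have "\<dots> \<le> real (score A n d) / ?s"
    using mult_left_mono[OF cheap] by simp
  finally have "score A n c \<le> score A n d"
    using assms(3) by (simp add: field_simps card_gt_0_iff)
  then show thesis
    using that d(1,4,5) cheap by blast
qed

lemma cheap_phase_step:
  assumes "finite (fst s)" "c \<in> C" "c \<notin> fst s" "supporters A n c \<noteq> {}" "cheap_phase c s"
    and rich: "\<forall>i\<in>supporters A n c. 1 / real (score A n c) \<le> snd s i"
    and step: "mes_step A C n tb k' s = Some s'"
  shows "cheap_phase c s'"
proof -
  let ?s = "real (score A n c)" and ?paid = "\<lambda>t i. card {e\<in>fst t. i \<in> supporters A n e}"
  obtain d where d: "d \<notin> fst s" "score A n c \<le> score A n d" "rho A n (snd s) d \<le> 1 / ?s"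
    "fst s' = insert d (fst s)" "snd s' = charge A n (snd s) d"
    by (rule cheap_choice[OF assms(2-4) rich step])
  have "\<beta> - real (?paid s' i) / ?s \<le> snd s' i" if i: "i \<in> supporters A n c" for i
  proof -
    have old: "\<beta> - real (?paid s i) / ?s \<le> snd s i"
      using assms(5) i unfolding cheap_phase_def by blast
    show ?thesis
    proof (cases "i \<in> supporters A n d")
      case True
      then have "{e\<in>fst s'. i \<in> supporters A n e} = insert d {e\<in>fst s. i \<in> supporters A n e}"
        using d(4) by auto
      then have "real (?paid s' i) = real (?paid s i) + 1"
        using assms(1) d(1) by simp
      moreover have "snd s i - 1 / ?s \<le> snd s' i"
        using True d(3) unfolding d(5) charge_def by auto
      ultimately show ?thesis
        using old by (simp add: add_divide_distrib)
    next
      case False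
      then have "{e\<in>fst s'. i \<in> supporters A n e} = {e\<in>fst s. i \<in> supporters A n e}"
        "snd s' i = snd s i"
        using d(4,5) unfolding charge_def by auto
      then show ?thesis
        using old by simp
    qed
  qed
  then show ?thesis
    using assms(5) d(2,4) unfolding cheap_phase_def by auto
qed

lemma threshold_inv_step:
  assumes "sound_state s" "c \<in> C" "threshold_inv c s" "mes_step A C n tb k' s = Some s'"
  shows "threshold_inv c s'"
proof -
  let ?many = "\<lambda>t. real (score A n c) * \<beta> - 1 < real (card {d\<in>fst t. score A n c \<le> score A n d})"
  have fin: "finite (fst s)" "finite (fst s')"
    using assms(1) sound_state_step[OF assms(1,4)] by (simp_all add: sound_state_finite)
  have grows: "fst s \<subseteq> fst s'"
    by (rule committee_grows[OF assms(4)])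
  then have "card {d\<in>fst s. score A n c \<le> score A n d} \<le> card {d\<in>fst s'. score A n c \<le> score A n d}"
    using fin(2) by (intro card_mono) auto
  then have many: "?many s \<Longrightarrow> ?many s'"
    by linarith
  have "?many s \<or> cheap_phase c s'" if "c \<notin> fst s" "cheap_phase c s"
  proof (cases "\<exists>i\<in>supporters A n c. snd s i < 1 / real (score A n c)")
    case True
    then show ?thesis
      using threshold_of_poor_supporter[OF fin(1) that(2)] by blast
  next
    case False
    then show ?thesis
      using cheap_phase_step[OF fin(1) assms(2) that(1) _ that(2) _ assms(4)]
      by (cases "supporters A n c = {}") (auto simp: not_less)
  qed
  then show ?thesis
    using assms(3) grows many unfolding threshold_inv_def by blast
qed

lemma unselected_threshold:
  assumes "c \<in> C - committee"
  shows "real (score A n c) * \<beta> - 1 < real (card {d\<in>committee. score A n c \<le> score A n d})"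
proof (cases "supporters A n c = {}")
  case True
  then show ?thesis
    by simp
next
  case False
  have "sound_state final_state \<and> threshold_inv c final_state"
  proof (rule final_state_invariant)
    show "sound_state ({}, \<lambda>_. \<beta>) \<and> threshold_inv c ({}, \<lambda>_. \<beta>)"
      by (simp add: sound_state_def threshold_inv_def cheap_phase_def)
  qed (use sound_state_step threshold_inv_step assms in blast)
  moreover obtain i where "i \<in> supporters A n c" "budget i < 1 / real (score A n c)"
    using affordable_if_equal_shares[OF False] not_affordable_final[OF assms] by (meson not_le)
  moreover have "finite committee"
    using committee_subset finite_C finite_subset by blast
  ultimately show ?thesis
    using threshold_of_poor_supporter assms unfolding threshold_inv_def committee_eq by blast
qed

lemma committee_certified:
  "card committee \<le> k \<Longrightarrow> equal_shares_certified A C n k \<beta> committee"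
  unfolding equal_shares_certified_def
  using committee_subset committee_score unselected_threshold by auto

end

lemma mes_vb_certified:
  assumes "valid_tiebreak tb" "valid_instance A C n k"
  shows "\<exists>\<beta>. equal_shares_certified A C n k \<beta> (mes_vb A C n tb k)"
proof -
  have run: "mes_run C tb"
    using assms unfolding valid_instance_def by (simp add: mes_run_def)
  have "1 \<le> n" "1 \<le> k"
    using assms(2) unfolding valid_instance_def by auto
  note card_le = mes_run.card_committee_le[OF run \<open>1 \<le> n\<close>]
  have certified: "\<exists>\<beta>. equal_shares_certified A C n k \<beta> (mes A C n tb k')"
    if "card (mes A C n tb k') \<le> k" for k'
    using mes_run.committee_certified[OF run that] by blast
  show ?thesis
  proof (cases "\<exists>k'\<ge>k. k \<le> card (mes A C n tb k')")
    case False
    then have "mes_vb A C n tb k = {}"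
      unfolding mes_vb_def using False by (simp only: if_False)
    then show ?thesis
      unfolding equal_shares_certified_def by (intro exI[of _ 0]) simp
  next
    case True
    define ks where "ks = (LEAST k'. k \<le> k' \<and> k \<le> card (mes A C n tb k'))"
    have ks: "k \<le> ks"
      using LeastI_ex[of "\<lambda>k'. k \<le> k' \<and> k \<le> card (mes A C n tb k')"] True unfolding ks_def by auto
    have "card (mes A C n tb (ks - 1)) \<le> k"
    proof (cases "k \<le> ks - 1")
      case True
      moreover have "ks - 1 < ks"
        using ks \<open>1 \<le> k\<close> by simp
      ultimately show ?thesis
        using not_less_Least[of "ks - 1"] unfolding ks_def by fastforce
    next
      case False
      then show ?thesis
        using card_le[of A "ks - 1"] by linarith
    qed
    moreover have "mes_vb A C n tb k =
        (if card (mes A C n tb ks) = k then mes A C n tb ks else mes A C n tb (ks - 1))"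
      unfolding mes_vb_def ks_def using True by (simp add: Let_def)
    ultimately show ?thesis
      using certified by (cases "card (mes A C n tb ks) = k") auto
  qed
qed

lemma mes_vb_eq_mes:
  assumes "card (mes A C n tb k) = k"
  shows "mes_vb A C n tb k = mes A C n tb k"
proof -
  have "(LEAST k'. k \<le> k' \<and> k \<le> card (mes A C n tb k')) = k"
    using assms by (intro Least_equality) auto
  then show ?thesis
    unfolding mes_vb_def using assms by (auto simp: Let_def)
qed

lemma mes_vb_eq_mes_pred:
  assumes "k \<le> k\<^sub>2" "k < card (mes A C n tb k\<^sub>2)"
    and "\<And>k'. k \<le> k' \<Longrightarrow> k' < k\<^sub>2 \<Longrightarrow> card (mes A C n tb k') < k"
  shows "mes_vb A C n tb k = mes A C n tb (k\<^sub>2 - 1)"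
proof -
  have "(LEAST k'. k \<le> k' \<and> k \<le> card (mes A C n tb k')) = k\<^sub>2"
    using assms by (intro Least_equality) (auto simp: not_le[symmetric])
  then show ?thesis
    unfolding mes_vb_def using assms(1,2) by (auto simp: Let_def)
qed

lemma sw_eq_sum_score:
  assumes "finite X"
  shows "sw A n X = (\<Sum>d\<in>X. score A n d)"
proof -
  have "sw A n X = (\<Sum>i\<in>voters n. \<Sum>d\<in>X. of_bool (d \<in> A i))"
    unfolding sw_def using assms by (simp add: Int_commute Int_def)
  also have "\<dots> = (\<Sum>d\<in>X. \<Sum>i\<in>voters n. of_bool (d \<in> A i))"
    by (rule sum.swap)
  also have "\<dots> = (\<Sum>d\<in>X. score A n d)"
    by (simp add: supporters_def Int_def)
  finally show ?thesis .
qed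

lemma score_le_cov: "d \<in> X \<Longrightarrow> score A n d \<le> cov A n X"
  unfolding cov_def by (rule card_mono) (auto simp: supporters_def)

lemma cov_le_sum_score: "finite X \<Longrightarrow> cov A n X \<le> (\<Sum>d\<in>X. score A n d)"
proof -
  assume "finite X"
  moreover have "{i \<in> voters n. A i \<inter> X \<noteq> {}} = (\<Union>d\<in>X. supporters A n d)"
    unfolding supporters_def by auto
  ultimately show ?thesis
    unfolding cov_def using card_UN_le by metis
qed

lemma finite_committee_values: "finite C \<Longrightarrow> finite {f W | W. W \<subseteq> C \<and> card W = k}"
  by (rule finite_subset[of _ "f ` Pow C"]) auto

lemma Max_committees_le:
  fixes f :: "'c set \<Rightarrow> 'b::linorder"
  assumes "finite C" "k \<le> card C" "\<And>W. W \<subseteq> C \<Longrightarrow> card W = k \<Longrightarrow> f W \<le> B"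
  shows "Max {f W | W. W \<subseteq> C \<and> card W = k} \<le> B"
proof -
  obtain W where "W \<subseteq> C" "card W = k"
    using obtain_subset_with_card_n[OF assms(2)] by metis
  then show ?thesis
    using finite_committee_values[OF assms(1)] assms(3) by (subst Max_le_iff) auto
qed

lemma le_Max_committees:
  fixes f :: "'c set \<Rightarrow> 'b::linorder"
  assumes "finite C" "W \<subseteq> C" "card W = k"
  shows "f W \<le> Max {f W' | W'. W' \<subseteq> C \<and> card W' = k}"
  using assms finite_committee_values[OF assms(1)] by (intro Max_ge) auto

lemma av_completionE:
  assumes "F \<in> av_completions A C n k W" "finite C" "W \<subseteq> C" "card W \<le> k"
  obtains T where "F = W \<union> T" "T \<subseteq> C - W" "F \<subseteq> C" "card F = k"
    "\<forall>d\<in>T. \<forall>c\<in>C - F. score A n c \<le> score A n d"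
proof -
  obtain T where F: "F = W \<union> T" and T: "T \<subseteq> C - W" "card T = k - card W"
    and opt: "\<And>T'. T' \<subseteq> C - W \<Longrightarrow> card T' = k - card W \<Longrightarrow> av_score A n T' \<le> av_score A n T"
    using assms(1) unfolding av_completions_def by blast
  have fin: "finite T" "finite W"
    using T(1) assms(2,3) finite_subset by blast+
  have "score A n c \<le> score A n d" if d: "d \<in> T" and c: "c \<in> C - F" for d c
  proof -
    let ?T' = "insert c (T - {d})"
    have "0 < card T"
      using d fin(1) card_gt_0_iff by blast
    then have "?T' \<subseteq> C - W" "card ?T' = card T"
      using T(1) F c d fin(1) by (auto simp: card_insert_if card_Diff_singleton)
    then have "av_score A n ?T' \<le> av_score A n T"
      using opt T(2) by simp
    moreover have "av_score A n ?T' = score A n c + (\<Sum>x\<in>T - {d}. score A n x)"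
      unfolding av_score_def using F c fin(1) by (subst sum.insert) auto
    moreover have "av_score A n T = score A n d + (\<Sum>x\<in>T - {d}. score A n x)"
      unfolding av_score_def using d fin(1) by (simp add: sum.remove)
    ultimately show ?thesis
      by simp
  qed
  moreover have "card F = k"
    using F T assms(4) fin card_Un_disjoint[of W T] by auto
  ultimately show thesis
    using that F T(1) assms(3) by blast
qed

lemma completion_reaches_max_score:
  assumes "finite C" "1 \<le> k" and cert: "equal_shares_certified A C n k \<beta> W"
    and F: "F \<in> av_completions A C n k W"
    and c: "c \<in> C" "\<forall>e\<in>C. score A n e \<le> score A n c"
  shows "\<exists>d\<in>F. score A n c \<le> score A n d"
proof -
  have W: "W \<subseteq> C" "0 \<le> \<beta>" "card W \<le> k" "\<forall>d\<in>W. 1 \<le> real (score A n d) * \<beta>"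
    "\<forall>c\<in>C - W. real (score A n c) * \<beta> - 1 < real (card {d\<in>W. score A n c \<le> score A n d})"
    using cert unfolding equal_shares_certified_def by auto
  obtain T where FT: "F = W \<union> T" "T \<subseteq> C - W" "F \<subseteq> C" "card F = k"
    and swap: "\<forall>d\<in>T. \<forall>c\<in>C - F. score A n c \<le> score A n d"
    by (rule av_completionE[OF F assms(1) W(1,3)])
  show ?thesis
  proof (cases "c \<in> F \<or> T \<noteq> {}")
    case True
    then show ?thesis
      using c swap FT(1) by blast
  next
    case False
    then have "W = F" "c \<in> C - W"
      using FT(1) c(1) by auto
    then obtain d where "d \<in> W"
      using FT(4) assms(2) by fastforce
    then have "1 \<le> real (score A n d) * \<beta>"
      using W(4) by blast
    also have "\<dots> \<le> real (score A n c) * \<beta>"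
      using c \<open>d \<in> W\<close> W(1,2) by (intro mult_right_mono) auto
    also have "\<dots> < real (card {d\<in>W. score A n c \<le> score A n d}) + 1"
      using bspec[OF W(5) \<open>c \<in> C - W\<close>] by linarith
    finally have "{d\<in>W. score A n c \<le> score A n d} \<noteq> {}"
      by (metis card.empty less_irrefl of_nat_0 add_0)
    then show ?thesis
      using \<open>W = F\<close> by auto
  qed
qed

lemma max_cov_le_mult_max_score:
  assumes "finite C" "k \<le> card C" "\<forall>e\<in>C. score A n e \<le> a"
  shows "max_cov A C n k \<le> k * a"
  unfolding max_cov_def
proof (rule Max_committees_le[OF assms(1,2)])
  fix W assume W: "W \<subseteq> C" "card W = k"
  then have "cov A n W \<le> (\<Sum>d\<in>W. score A n d)"
    using cov_le_sum_score finite_subset[OF _ assms(1)] by blast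
  also have "\<dots> \<le> k * a"
    using W assms(3) sum_bounded_above[of W "score A n" a] by auto
  finally show "cov A n W \<le> k * a" .
qed

lemma repr_ratio_ge_inverse_k:
  assumes inst: "valid_instance A C n k" and cert: "equal_shares_certified A C n k \<beta> W"
    and F: "F \<in> av_completions A C n k W" and pos: "0 < max_cov A C n k"
  shows "1 / real k \<le> repr_ratio A C n k F"
proof -
  have fin: "finite C" "C \<noteq> {}" and k: "1 \<le> k" "k \<le> card C"
    using inst unfolding valid_instance_def by auto
  define a where "a = Max (score A n ` C)"
  have "a \<in> score A n ` C"
    unfolding a_def using fin by (intro Max_in) auto
  then obtain c where c: "c \<in> C" "score A n c = a"
    by auto
  have a_max: "\<forall>e\<in>C. score A n e \<le> a"
    unfolding a_def using fin by auto
  obtain d where "d \<in> F" "a \<le> score A n d"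
    using completion_reaches_max_score[OF fin(1) k(1) cert F c(1)] a_max c(2) by auto
  then have "a \<le> cov A n F"
    using score_le_cov order_trans by metis
  then have "max_cov A C n k \<le> k * cov A n F"
    using max_cov_le_mult_max_score[OF fin(1) k(2) a_max] by (meson le_trans mult_le_mono2)
  then have "real (max_cov A C n k) \<le> real k * real (cov A n F)"
    by (simp only: of_nat_mult[symmetric] of_nat_le_iff)
  then show ?thesis
    unfolding repr_ratio_def using pos k by (simp add: field_simps)
qed

lemma max_sw_le_sum_max_score:
  assumes "finite C" "k \<le> card C" "F \<subseteq> C" "card F = k"
    and outside: "\<And>c. c \<in> C - F \<Longrightarrow> score A n c \<le> s"
  shows "max_sw A C n k \<le> (\<Sum>d\<in>F. max (score A n d) s)"
  unfolding max_sw_def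
proof (rule Max_committees_le[OF assms(1,2)])
  fix W assume W: "W \<subseteq> C" "card W = k"
  have fin: "finite W" "finite F"
    using W(1) assms(1,3) finite_subset by blast+
  have "card (W - F) = card (F - W)"
    using card_Int_Diff[OF fin(1), of F] card_Int_Diff[OF fin(2), of W] W(2) assms(4)
    by (simp add: Int_commute)
  have "sw A n W = (\<Sum>d\<in>W \<inter> F. score A n d) + (\<Sum>d\<in>W - F. score A n d)"
    unfolding sw_eq_sum_score[OF fin(1)] by (rule sum.Int_Diff[OF fin(1)])
  also have "\<dots> \<le> (\<Sum>d\<in>W \<inter> F. max (score A n d) s) + card (W - F) * s"
    using W(1) outside sum_bounded_above[of "W - F" "score A n" s] by (intro add_mono sum_mono) auto
  also have "card (W - F) * s \<le> (\<Sum>d\<in>F - W. max (score A n d) s)"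
    using \<open>card (W - F) = card (F - W)\<close> sum_bounded_below[of "F - W" s "\<lambda>d. max (score A n d) s"]
    by auto
  also have "(\<Sum>d\<in>W \<inter> F. max (score A n d) s) + (\<Sum>d\<in>F - W. max (score A n d) s) =
      (\<Sum>d\<in>F. max (score A n d) s)"
    unfolding Int_commute[of W F] by (rule sum.Int_Diff[OF fin(2), symmetric])
  finally show "sw A n W \<le> (\<Sum>d\<in>F. max (score A n d) s)"
    by simp
qed

lemma two_over_sqrt_bounds:
  fixes k :: real
  assumes "1 \<le> k"
  shows "0 \<le> 2 / sqrt k - 2 / k" "2 / sqrt k - 2 / k \<le> 1"
    "(2 / sqrt k - 2 / k) * k = 2 * sqrt k - 2"
proof -
  let ?u = "sqrt k"
  have u: "1 \<le> ?u" "?u * ?u = k"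
    using assms by auto
  then have r: "2 / ?u - 2 / k = (2 * ?u - 2) / k"
    by (simp add: field_simps)
  show "(2 / ?u - 2 / k) * k = 2 * ?u - 2"
    unfolding r using assms by simp
  show "0 \<le> 2 / ?u - 2 / k"
    unfolding r using u assms by simp
  have "0 \<le> (?u - 1) * (?u - 1)"
    by simp
  then have "2 * ?u - 2 \<le> k"
    using u(2) by (simp add: algebra_simps)
  then show "2 / ?u - 2 / k \<le> 1"
    unfolding r using assms by simp
qed

text \<open>Here \<open>t\<close> stands for \<open>s * \<beta>\<close>. For \<open>t \<ge> 1\<close> the difference of the two sides increases with
  \<open>j\<close>, and at \<open>j = t - 1\<close> it equals \<open>(t - sqrt k)\<^sup>2 + 1\<close>: this is where \<open>2 / sqrt k - 2 / k\<close>
  comes from.\<close>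
lemma sqrt_tradeoff:
  fixes k j t :: real
  assumes "1 \<le> k" "0 \<le> t" "0 \<le> j" "j \<le> k" "t - 1 < j"
  defines "r \<equiv> 2 / sqrt k - 2 / k"
  shows "r * (k - j) * t \<le> (1 - r) * j * t + (k - j)"
proof -
  have r: "0 \<le> r" "r \<le> 1" "r * k = 2 * sqrt k - 2"
    using two_over_sqrt_bounds[OF assms(1)] unfolding r_def by auto
  show ?thesis
  proof (cases "r * t \<le> 1")
    case True
    then have "r * (k - j) * t \<le> k - j"
      using mult_left_mono[OF True, of "k - j"] assms(4) by (simp add: algebra_simps)
    moreover have "0 \<le> (1 - r) * j * t"
      using r assms by simp
    ultimately show ?thesis
      by linarith
  next
    case False
    then have "1 \<le> t"
      using r mult_mono[of r 1 t 1] assms(2) by (cases "t \<le> 1") auto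
    define g where "g x = (1 - r) * x * t + (k - x) - r * (k - x) * t" for x
    have "g j = g (t - 1) + (j - (t - 1)) * (t - 1)"
      unfolding g_def by (simp add: algebra_simps)
    also have "g (t - 1) = (t - sqrt k)\<^sup>2 + 1"
    proof -
      have "g (t - 1) = t * t - 2 * t + k + 1 - (r * k) * t"
        unfolding g_def by (simp add: algebra_simps)
      then show ?thesis
        unfolding r(3) using assms(1) by (simp add: algebra_simps power2_eq_square)
    qed
    finally have "0 \<le> g j"
      using assms(5) \<open>1 \<le> t\<close> by (smt (verit) mult_nonneg_nonneg zero_le_power2)
    then show ?thesis
      unfolding g_def by simp
  qed
qed

lemma sqrt_ratio_bound:
  fixes k j s \<beta> X Y :: real
  assumes "1 \<le> k" "0 \<le> \<beta>" "0 \<le> s" "0 \<le> j" "j \<le> k" "s * \<beta> - 1 < j"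
    and "j * s \<le> X" "0 \<le> Y" "k - j \<le> \<beta> * Y"
  shows "(2 / sqrt k - 2 / k) * (X + (k - j) * s) \<le> X + Y"
proof -
  define r where "r = 2 / sqrt k - 2 / k"
  have r: "0 \<le> r" "r \<le> 1"
    using two_over_sqrt_bounds[OF assms(1)] unfolding r_def by auto
  have "r * (k - j) * s \<le> (1 - r) * j * s + Y"
  proof (cases "\<beta> = 0")
    case True
    have "0 \<le> (1 - r) * j * s"
      using r assms(3,4) by simp
    moreover have "k = j"
      using True assms(5,9) by simp
    ultimately show ?thesis
      using assms(8) by simp
  next
    case False
    then have "\<beta> * (r * (k - j) * s) \<le> \<beta> * ((1 - r) * j * s) + \<beta> * Y"
      using sqrt_tradeoff[OF assms(1) _ assms(4,5), of "s * \<beta>"] assms(2,3,6,9)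
      unfolding r_def by (simp add: algebra_simps)
    then show ?thesis
      using False assms(2) by (simp add: distrib_left[symmetric])
  qed
  moreover have "(1 - r) * (j * s) \<le> (1 - r) * X"
    using assms(7) r by (intro mult_left_mono) auto
  ultimately show ?thesis
    unfolding r_def[symmetric] by (simp add: algebra_simps)
qed

lemma sum_max_threshold_split:
  fixes f :: "'a \<Rightarrow> nat"
  assumes "finite F"
  shows "(\<Sum>d\<in>F. max (f d) s) = (\<Sum>d\<in>{d\<in>F. s \<le> f d}. f d) + card (F - {d\<in>F. s \<le> f d}) * s"
proof -
  have "(\<Sum>d\<in>F. max (f d) s) =
      (\<Sum>d\<in>F - {d\<in>F. s \<le> f d}. max (f d) s) + (\<Sum>d\<in>{d\<in>F. s \<le> f d}. max (f d) s)"
    by (rule sum.subset_diff) (use assms in auto)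
  also have "\<dots> = (\<Sum>d\<in>F - {d\<in>F. s \<le> f d}. s) + (\<Sum>d\<in>{d\<in>F. s \<le> f d}. f d)"
    by (intro arg_cong2[where f = "(+)"] sum.cong) auto
  finally show ?thesis
    by simp
qed

lemma unpopular_members_selected:
  assumes "finite C" "equal_shares_certified A C n k \<beta> W" "F \<in> av_completions A C n k W" "c \<in> C - F"
  shows "{d\<in>F. score A n d < score A n c} \<subseteq> W"
proof -
  have "W \<subseteq> C" "card W \<le> k"
    using assms(2) unfolding equal_shares_certified_def by auto
  then obtain T where FT: "F = W \<union> T" "T \<subseteq> C - W" "F \<subseteq> C" "card F = k"
    and swap: "\<forall>d\<in>T. \<forall>c\<in>C - F. score A n c \<le> score A n d"
    by (rule av_completionE[OF assms(3,1)])
  show ?thesis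
  proof
    fix d assume d: "d \<in> {d\<in>F. score A n d < score A n c}"
    show "d \<in> W"
    proof (rule ccontr)
      assume "d \<notin> W"
      then have "score A n c \<le> score A n d"
        using d FT(1) swap assms(4) by blast
      then show False
        using d by simp
    qed
  qed
qed

lemma many_popular_members:
  assumes "equal_shares_certified A C n k \<beta> W" "W \<subseteq> F" "finite F" "c \<in> C - F"
  shows "real (score A n c) * \<beta> - 1 < real (card {d\<in>F. score A n c \<le> score A n d})"
proof -
  have "real (score A n c) * \<beta> - 1 < real (card {d\<in>W. score A n c \<le> score A n d})"
    using assms(1,2,4) unfolding equal_shares_certified_def by blast
  also have "\<dots> \<le> real (card {d\<in>F. score A n c \<le> score A n d})"
    using assms(2,3) by (intro of_nat_mono card_mono) auto
  finally show ?thesis .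
qed

lemma completion_threshold_split:
  assumes "finite C" and cert: "equal_shares_certified A C n k \<beta> W"
    and F: "F \<in> av_completions A C n k W" and s: "s = 0 \<or> (\<exists>c\<in>C - F. score A n c = s)"
  shows "{d\<in>F. score A n d < s} \<subseteq> W \<and> real s * \<beta> - 1 < real (card {d\<in>F. s \<le> score A n d})"
  using s
proof
  assume "\<exists>c\<in>C - F. score A n c = s"
  then obtain c where c: "c \<in> C - F" "score A n c = s"
    by blast
  have "W \<subseteq> C" "card W \<le> k"
    using cert unfolding equal_shares_certified_def by auto
  then have "W \<subseteq> F" "finite F"
    using av_completionE[OF F assms(1)] finite_subset[OF _ assms(1)] by blast+
  then show ?thesis
    using unpopular_members_selected[OF assms(1) cert F c(1)] many_popular_members[OF cert _ _ c(1)] c(2)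
    by simp
qed simp

text \<open>Split \<open>F\<close> at the score \<open>s\<close> of the best outside candidate: the members below \<open>s\<close> were
  selected by MES, hence have at least \<open>1 / \<beta>\<close> supporters each, and by the certificate of the
  outside candidate more than \<open>s * \<beta> - 1\<close> members reach \<open>s\<close>.\<close>
lemma sum_max_score_le_sw:
  assumes inst: "valid_instance A C n k" and cert: "equal_shares_certified A C n k \<beta> W"
    and F: "F \<in> av_completions A C n k W" and s: "s = 0 \<or> (\<exists>c\<in>C - F. score A n c = s)"
  shows "(2 / sqrt (real k) - 2 / real k) * real (\<Sum>d\<in>F. max (score A n d) s) \<le> real (sw A n F)"
proof -
  have fin: "finite C" and k: "1 \<le> k"
    and W: "W \<subseteq> C" "card W \<le> k" "0 \<le> \<beta>" "\<forall>d\<in>W. 1 \<le> real (score A n d) * \<beta>"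
    using inst cert unfolding valid_instance_def equal_shares_certified_def by auto
  obtain T where FT: "F = W \<union> T" "T \<subseteq> C - W" "F \<subseteq> C" "card F = k"
    and "\<forall>d\<in>T. \<forall>c\<in>C - F. score A n c \<le> score A n d"
    by (rule av_completionE[OF F fin W(1,2)])
  define J where "J = {d\<in>F. s \<le> score A n d}"
  have finF: "finite F" and J: "J \<subseteq> F"
    using FT(3) fin finite_subset unfolding J_def by blast+
  then have card_J: "card J \<le> k" "card (F - J) = k - card J"
    using card_mono[OF finF J] card_Diff_subset[OF finite_subset[OF J finF] J] FT(4) by simp_all
  have "F - J = {d\<in>F. score A n d < s}"
    unfolding J_def by auto
  then have rest: "F - J \<subseteq> W" and count: "real s * \<beta> - 1 < real (card J)"
    using completion_threshold_split[OF fin cert F s] unfolding J_def by auto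
  have "card J * s \<le> (\<Sum>d\<in>J. score A n d)"
    using sum_bounded_below[of J s "score A n"] unfolding J_def by simp
  then have X: "real (card J) * real s \<le> real (\<Sum>d\<in>J. score A n d)"
    by (simp only: of_nat_mult[symmetric] of_nat_le_iff)
  have "real k - real (card J) = (\<Sum>d\<in>F - J. 1)"
    using card_J by simp
  also have "\<dots> \<le> (\<Sum>d\<in>F - J. real (score A n d) * \<beta>)"
    using rest W(4) by (intro sum_mono) auto
  finally have Y: "real k - real (card J) \<le> \<beta> * real (\<Sum>d\<in>F - J. score A n d)"
    by (simp add: sum_distrib_left mult.commute)
  have "(2 / sqrt (real k) - 2 / real k) *
      (real (\<Sum>d\<in>J. score A n d) + (real k - real (card J)) * real s) \<le>
      real (\<Sum>d\<in>J. score A n d) + real (\<Sum>d\<in>F - J. score A n d)"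
    using k W(3) count X Y card_J(1) by (intro sqrt_ratio_bound) (auto simp: sum_nonneg)
  moreover have "sw A n F = (\<Sum>d\<in>J. score A n d) + (\<Sum>d\<in>F - J. score A n d)"
    using sum.subset_diff[OF J finF, of "score A n"] sw_eq_sum_score[OF finF] by simp
  ultimately show ?thesis
    using sum_max_threshold_split[OF finF, of "score A n" s] card_J unfolding J_def[symmetric]
    by (simp add: of_nat_diff)
qed

lemma util_ratio_ge_sqrt_bound:
  assumes inst: "valid_instance A C n k" and cert: "equal_shares_certified A C n k \<beta> W"
    and F: "F \<in> av_completions A C n k W" and pos: "0 < max_sw A C n k"
  shows "2 / sqrt (real k) - 2 / real k \<le> util_ratio A C n k F"
proof -
  have fin: "finite C" and k: "1 \<le> k" "k \<le> card C"
    using inst unfolding valid_instance_def by auto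
  have "F \<subseteq> C" "card F = k"
    using cert av_completionE[OF F fin] unfolding equal_shares_certified_def by metis+
  define s where "s = Max (insert 0 (score A n ` (C - F)))"
  have s_max: "\<forall>c\<in>C - F. score A n c \<le> s"
    unfolding s_def using fin by auto
  have "s \<in> insert 0 (score A n ` (C - F))"
    unfolding s_def using fin by (intro Max_in) auto
  then have "s = 0 \<or> (\<exists>c\<in>C - F. score A n c = s)"
    by auto
  define r where "r = 2 / sqrt (real k) - 2 / real k"
  have "0 \<le> r"
    using two_over_sqrt_bounds(1)[of "real k"] k unfolding r_def by simp
  moreover have "max_sw A C n k \<le> (\<Sum>d\<in>F. max (score A n d) s)"
    using max_sw_le_sum_max_score[OF fin k(2) \<open>F \<subseteq> C\<close> \<open>card F = k\<close>, of A n s] s_max by blast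
  ultimately have "r * real (max_sw A C n k) \<le> r * real (\<Sum>d\<in>F. max (score A n d) s)"
    by (intro mult_left_mono) (simp_all only: of_nat_le_iff)
  also have "\<dots> \<le> real (sw A n F)"
    unfolding r_def by (rule sum_max_score_le_sw[OF inst cert F \<open>s = 0 \<or> _\<close>])
  finally show ?thesis
    unfolding util_ratio_def r_def using pos by (simp add: field_simps)
qed

theorem mes_vb_av_guarantees:
  assumes "valid_instance A C n k" "W \<in> mes_vb_av_outputs A C n k"
  shows "0 < max_cov A C n k \<Longrightarrow> 1 / real k \<le> repr_ratio A C n k W"
    and "0 < max_sw A C n k \<Longrightarrow> 2 / sqrt (real k) - 2 / real k \<le> util_ratio A C n k W"
proof -
  obtain tb where "valid_tiebreak tb" "W \<in> av_completions A C n k (mes_vb A C n tb k)"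
    using assms(2) unfolding mes_vb_av_outputs_def by auto
  moreover obtain \<beta> where "equal_shares_certified A C n k \<beta> (mes_vb A C n tb k)"
    using mes_vb_certified[OF \<open>valid_tiebreak tb\<close> assms(1)] by blast
  ultimately show "0 < max_cov A C n k \<Longrightarrow> 1 / real k \<le> repr_ratio A C n k W"
    and "0 < max_sw A C n k \<Longrightarrow> 2 / sqrt (real k) - 2 / real k \<le> util_ratio A C n k W"
    using repr_ratio_ge_inverse_k util_ratio_ge_sqrt_bound assms(1) by blast+
qed

definition clone_approvals :: "nat \<Rightarrow> nat \<Rightarrow> nat \<Rightarrow> nat set" where
  "clone_approvals p g i = (if i \<le> g then {..<p} else {p + i})"

abbreviation singletons :: "nat \<Rightarrow> nat \<Rightarrow> nat \<Rightarrow> nat set" where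
  "singletons p g n \<equiv> (\<lambda>i. p + i) ` {g<..n}"

definition clone_candidates :: "nat \<Rightarrow> nat \<Rightarrow> nat \<Rightarrow> nat set" where
  "clone_candidates p g n = {..<p} \<union> singletons p g n"

lemma supporters_clone: "d < p \<Longrightarrow> g \<le> n \<Longrightarrow> supporters (clone_approvals p g) n d = {1..g}"
  by (auto simp: supporters_def voters_def clone_approvals_def)

lemma supporters_singleton: "g < i \<Longrightarrow> i \<le> n \<Longrightarrow> supporters (clone_approvals p g) n (p + i) = {i}"
  by (auto simp: supporters_def voters_def clone_approvals_def)

lemma clone_candidatesE:
  assumes "e \<in> clone_candidates p g n"
  obtains "e < p" | i where "g < i" "i \<le> n" "e = p + i"
proof (cases "e < p")
  case True
  then show thesis
    by (rule that(1))
next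
  case False
  then have "e \<in> (\<lambda>i. p + i) ` {g<..n}"
    using assms unfolding clone_candidates_def by blast
  then obtain i where "i \<in> {g<..n}" "e = p + i"
    by (rule imageE)
  then show thesis
    using that(2) by simp
qed

lemma finite_clone_candidates: "finite (clone_candidates p g n)"
  by (simp add: clone_candidates_def)

lemma card_singletons: "card (singletons p g n) = n - g"
  by (simp add: card_image)

lemma valid_instance_clone:
  assumes "g \<le> n" "1 \<le> n" "1 \<le> k" "k \<le> p"
  shows "valid_instance (clone_approvals p g) (clone_candidates p g n) n k"
proof -
  have "k \<le> card {..<p}"
    using assms(4) by simp
  also have "\<dots> \<le> card (clone_candidates p g n)"
    by (rule card_mono[OF finite_clone_candidates]) (auto simp: clone_candidates_def)
  finally show ?thesis
    using assms unfolding valid_instance_def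
    by (auto simp: finite_clone_candidates voters_def clone_approvals_def clone_candidates_def)
qed

lemma valid_tiebreak_exists: "\<exists>tb. valid_tiebreak tb"
  unfolding valid_tiebreak_def by (auto intro: someI)

locale clone_run = mes_run "clone_approvals p g" "clone_candidates p g n" n tb k'
  for p g n :: nat and tb :: "nat tiebreak" and k' :: nat +
  assumes group_pos: "1 \<le> g" and group_le: "g \<le> n"
begin

lemma closed_clone_group: "closed_group (clone_approvals p g) (clone_candidates p g n) n {1..g}"
  unfolding closed_group_def
  by (auto elim!: clone_candidatesE simp: supporters_clone supporters_singleton group_le)

lemma closed_singleton_group:
  "g < i \<Longrightarrow> closed_group (clone_approvals p g) (clone_candidates p g n) n {i}"
  unfolding closed_group_def
  by (auto elim!: clone_candidatesE simp: supporters_clone supporters_singleton group_le)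

lemma committee_cases:
  assumes "e \<in> committee"
  obtains "e < p" "supporters (clone_approvals p g) n e = {1..g}"
  | i where "g < i" "i \<le> n" "e = p + i" "supporters (clone_approvals p g) n e = {i}"
proof -
  have "e \<in> clone_candidates p g n"
    using assms committee_subset by blast
  then show thesis
    by (cases rule: clone_candidatesE) (use that supporters_clone supporters_singleton group_le in auto)
qed

lemma clone_part:
  "{e\<in>committee. supporters (clone_approvals p g) n e \<subseteq> {1..g}} = committee \<inter> {..<p}"
proof -
  have "supporters (clone_approvals p g) n e \<subseteq> {1..g} \<longleftrightarrow> e < p" if "e \<in> committee" for e
    using that by (cases rule: committee_cases) auto
  then show ?thesis
    by blast
qed

lemma singleton_part:
  assumes "g < i"
  shows "{e\<in>committee. supporters (clone_approvals p g) n e \<subseteq> {i}} = committee \<inter> {p + i}"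
proof -
  have "supporters (clone_approvals p g) n e \<subseteq> {i} \<longleftrightarrow> e = p + i" if "e \<in> committee" for e
    using that group_pos assms by (cases rule: committee_cases) auto
  then show ?thesis
    by blast
qed

lemma card_clone_part_le: "real (card (committee \<inter> {..<p})) \<le> real g * \<beta>"
  using closed_group_count_le[OF _ closed_clone_group] clone_part by simp

lemma card_clone_part_gt:
  assumes "\<not> {..<p} \<subseteq> committee"
  shows "real g * \<beta> - 1 < real (card (committee \<inter> {..<p}))"
proof -
  obtain d where "d < p" "d \<notin> committee"
    using assms by auto
  then have "d \<in> clone_candidates p g n - committee"
    by (simp add: clone_candidates_def)
  then show ?thesis
    using closed_group_count_gt[OF _ closed_clone_group] supporters_clone[OF \<open>d < p\<close> group_le]
      clone_part by simp
qed

lemma singleton_in_committee_iff: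
  assumes "g < i" "i \<le> n"
  shows "p + i \<in> committee \<longleftrightarrow> n \<le> k'"
proof -
  have n: "0 < n"
    using assms by simp
  have "p + i \<in> clone_candidates p g n"
    using assms by (auto simp: clone_candidates_def)
  then have "p + i \<notin> committee \<Longrightarrow> \<beta> < 1"
    using closed_group_count_gt[OF _ closed_singleton_group[OF assms(1)], of "p + i"]
      supporters_singleton[OF assms] singleton_part[OF assms(1)] by simp
  moreover have "p + i \<in> committee \<Longrightarrow> 1 \<le> \<beta>"
    using closed_group_count_le[OF _ closed_singleton_group[OF assms(1)]] singleton_part[OF assms(1)]
    by simp
  moreover have "1 \<le> \<beta> \<longleftrightarrow> n \<le> k'"
    using n by (simp add: le_divide_eq_1)
  ultimately show ?thesis
    by (meson not_less)
qed

lemma committee_subset_clones: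
  assumes "k' < n"
  shows "committee \<subseteq> {..<p}"
proof
  fix e assume e: "e \<in> committee"
  then show "e \<in> {..<p}"
    by (cases rule: committee_cases) (use e singleton_in_committee_iff assms in auto)
qed

lemma committee_full_budget:
  assumes "n \<le> k'"
  shows "committee = (committee \<inter> {..<p}) \<union> singletons p g n"
proof (intro equalityI subsetI)
  fix e assume e: "e \<in> committee"
  then show "e \<in> (committee \<inter> {..<p}) \<union> singletons p g n"
    by (cases rule: committee_cases) (use e in auto)
next
  fix e assume e: "e \<in> (committee \<inter> {..<p}) \<union> singletons p g n"
  show "e \<in> committee"
  proof (cases "e \<in> singletons p g n")
    case True
    then obtain i where "i \<in> {g<..n}" "e = p + i"
      by (rule imageE)
    then show ?thesis
      using singleton_in_committee_iff assms by simp
  qed (use e in blast)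
qed

lemma card_committee_lt_group:
  assumes "k' < n"
  shows "card committee < g"
proof -
  have "real (card committee) \<le> real g * \<beta>"
    using card_clone_part_le Int_absorb2[OF committee_subset_clones[OF assms]] by simp
  also have "\<dots> < real g"
    using assms group_pos by (simp add: field_simps)
  finally show ?thesis
    by simp
qed

lemma card_clone_part_ge:
  assumes "n \<le> k'"
  shows "min p g \<le> card (committee \<inter> {..<p})"
proof (cases "{..<p} \<subseteq> committee")
  case True
  then show ?thesis
    by (simp add: Int_absorb1)
next
  case False
  have "real g \<le> real g * \<beta>"
    using assms group_pos group_le by (simp add: field_simps)
  then have "real g < real (card (committee \<inter> {..<p})) + 1"
    using card_clone_part_gt[OF False] by linarith
  then show ?thesis
    by linarith
qed

lemma card_clone_part_eq_group:
  assumes "k' = n" "g \<le> p"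
  shows "card (committee \<inter> {..<p}) = g"
proof -
  have "real (card (committee \<inter> {..<p})) \<le> real g"
    using card_clone_part_le assms(1) group_pos group_le by simp
  moreover have "g \<le> card (committee \<inter> {..<p})"
    using card_clone_part_ge assms by simp
  ultimately show ?thesis
    by simp
qed

lemma card_committee_full_budget:
  assumes "n \<le> k'"
  shows "card committee = card (committee \<inter> {..<p}) + (n - g)"
proof -
  have "card ((committee \<inter> {..<p}) \<union> singletons p g n) = card (committee \<inter> {..<p}) + (n - g)"
    by (subst card_Un_disjoint) (auto simp: card_singletons)
  then show ?thesis
    using committee_full_budget[OF assms] by simp
qed

lemma sw_committee_full_budget:
  assumes "n \<le> k'"
  shows "sw (clone_approvals p g) n committee = card (committee \<inter> {..<p}) * g + (n - g)"
proof -
  let ?score = "score (clone_approvals p g) n"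
  have "finite committee"
    using committee_subset finite_clone_candidates finite_subset by blast
  then have "sw (clone_approvals p g) n committee = (\<Sum>d\<in>committee. ?score d)"
    by (rule sw_eq_sum_score)
  also have "\<dots> = (\<Sum>d\<in>(committee \<inter> {..<p}) \<union> singletons p g n. ?score d)"
    using committee_full_budget[OF assms] by (rule arg_cong)
  also have "\<dots> = (\<Sum>d\<in>committee \<inter> {..<p}. ?score d) + (\<Sum>d\<in>singletons p g n. ?score d)"
    by (rule sum.union_disjoint) auto
  also have "(\<Sum>d\<in>singletons p g n. ?score d) = (\<Sum>i\<in>{g<..n}. ?score (p + i))"
    by (rule sum.reindex_cong[of "\<lambda>i. p + i"]) auto
  finally show ?thesis
    by (simp add: supporters_clone supporters_singleton group_le)
qed

end

lemma clone_run_intro: "valid_tiebreak tb \<Longrightarrow> 1 \<le> g \<Longrightarrow> g \<le> n \<Longrightarrow> clone_run p g n tb"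
  by (simp add: clone_run_def clone_run_axioms_def mes_run_def finite_clone_candidates)

lemma av_completion_of_max_score:
  assumes "finite C" "W \<subseteq> F" "F \<subseteq> C" "card F = k"
    and "\<And>d. d \<in> F - W \<Longrightarrow> score A n d = M" "\<And>c. c \<in> C \<Longrightarrow> score A n c \<le> M"
  shows "F \<in> av_completions A C n k W"
  unfolding av_completions_def
proof (intro CollectI exI conjI allI impI)
  have fin: "finite F"
    using assms(1,3) finite_subset by blast
  show "F = W \<union> (F - W)" "F - W \<subseteq> C - W"
    using assms(2,3) by auto
  show card: "card (F - W) = k - card W"
    using card_Diff_subset[OF finite_subset[OF assms(2) fin] assms(2)] assms(4) by simp
  fix T' assume T': "T' \<subseteq> C - W \<and> card T' = k - card W"
  have "av_score A n T' \<le> card T' * M"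
    unfolding av_score_def using T' assms(6) sum_bounded_above[of T' "score A n" M] by auto
  also have "\<dots> = av_score A n (F - W)"
    unfolding av_score_def using T' card assms(5) by simp
  finally show "av_score A n T' \<le> av_score A n (F - W)" .
qed

lemma self_av_completion: "finite C \<Longrightarrow> W \<subseteq> C \<Longrightarrow> card W = k \<Longrightarrow> W \<in> av_completions A C n k W"
  by (rule av_completion_of_max_score[where M = "Max (score A n ` C)"]) auto

lemma clones_av_completion:
  assumes "1 \<le> g" "g \<le> n" "W \<subseteq> {..<p}"
  shows "{..<p} \<in> av_completions (clone_approvals p g) (clone_candidates p g n) n p W"
proof (rule av_completion_of_max_score[where M = g])
  show "score (clone_approvals p g) n c \<le> g" if "c \<in> clone_candidates p g n" for c
    using that assms(1,2)
    by (cases rule: clone_candidatesE) (simp_all add: supporters_clone supporters_singleton)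
qed (use assms in \<open>auto simp: finite_clone_candidates clone_candidates_def supporters_clone\<close>)

lemma sw_clones: "g \<le> n \<Longrightarrow> sw (clone_approvals p g) n {..<p} = p * g"
  by (simp add: sw_eq_sum_score supporters_clone)

lemma max_sw_clones_ge:
  assumes "g \<le> n"
  shows "p * g \<le> max_sw (clone_approvals p g) (clone_candidates p g n) n p"
  unfolding max_sw_def sw_clones[OF assms, symmetric]
  by (intro le_Max_committees[OF finite_clone_candidates]) (auto simp: clone_candidates_def)

lemma cov_clones_le: "cov (clone_approvals p g) n {..<p} \<le> g"
proof -
  have "cov (clone_approvals p g) n {..<p} \<le> card {1..g}"
    unfolding cov_def by (rule card_mono) (auto simp: voters_def clone_approvals_def)
  then show ?thesis
    by simp
qed

lemma repr_lower_example:
  assumes "2 \<le> k"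
  shows "\<exists>(A :: nat \<Rightarrow> nat set) C n W. valid_instance A C n k \<and> W \<in> mes_vb_av_outputs A C n k \<and>
    0 < max_cov A C n k \<and> repr_ratio A C n k W \<le> 2 / real k"
proof -
  obtain tb :: "nat tiebreak" where tb: "valid_tiebreak tb"
    using valid_tiebreak_exists by blast
  let ?A = "clone_approvals k 2" and ?C = "clone_candidates k 2 (k + 2)" and ?n = "k + 2"
  have run: "clone_run k 2 (k + 2) tb"
    by (rule clone_run_intro[OF tb]) auto
  have "card (mes ?A ?C ?n tb k') < k" if "k' < k + 2" for k'
    using clone_run.card_committee_lt_group[OF run that] assms by simp
  moreover have "k < card (mes ?A ?C ?n tb (k + 2))"
    using clone_run.card_committee_full_budget[OF run, of "k + 2"]
      clone_run.card_clone_part_ge[OF run, of "k + 2"] assms by simp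
  ultimately have "mes_vb ?A ?C ?n tb k = mes ?A ?C ?n tb (k + 1)"
    using mes_vb_eq_mes_pred[of k "k + 2"] by fastforce
  then have "{..<k} \<in> av_completions ?A ?C ?n k (mes_vb ?A ?C ?n tb k)"
    using clone_run.committee_subset_clones[OF run, of "k + 1"] by (simp add: clones_av_completion)
  then have out: "{..<k} \<in> mes_vb_av_outputs ?A ?C ?n k"
    unfolding mes_vb_av_outputs_def using tb by blast
  define W\<^sub>0 where "W\<^sub>0 = insert 0 ((\<lambda>i. k + i) ` {2<..k + 1})"
  have "W\<^sub>0 \<subseteq> ?C"
    using assms by (auto simp: W\<^sub>0_def clone_candidates_def)
  have "card W\<^sub>0 = k"
    using assms unfolding W\<^sub>0_def by (subst card_insert_disjoint) (auto simp: card_image)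
  have "card {1..k + 1} \<le> cov ?A ?n W\<^sub>0"
    unfolding cov_def using assms
    by (intro card_mono) (auto simp: voters_def clone_approvals_def W\<^sub>0_def)
  also have "\<dots> \<le> max_cov ?A ?C ?n k"
    unfolding max_cov_def
    by (rule le_Max_committees[OF finite_clone_candidates \<open>W\<^sub>0 \<subseteq> ?C\<close> \<open>card W\<^sub>0 = k\<close>])
  finally have max_cov: "real k \<le> real (max_cov ?A ?C ?n k)"
    by simp
  have "repr_ratio ?A ?C ?n k {..<k} \<le> 2 / real k"
    unfolding repr_ratio_def using cov_clones_le[of k 2 ?n] max_cov assms by (intro frac_le) auto
  moreover have "valid_instance ?A ?C ?n k"
    using assms by (intro valid_instance_clone) auto
  ultimately show ?thesis
    using out max_cov assms by (intro exI[of _ ?A] exI[of _ ?C] exI[of _ ?n] exI[of _ "{..<k}"]) simp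
qed

lemma util_lower_example:
  assumes "1 \<le> m"
  shows "\<exists>(A :: nat \<Rightarrow> nat set) C n W. valid_instance A C n (m * m) \<and>
    W \<in> mes_vb_av_outputs A C n (m * m) \<and> 0 < max_sw A C n (m * m) \<and>
    util_ratio A C n (m * m) W \<le> 2 / sqrt (real (m * m))"
proof -
  obtain tb :: "nat tiebreak" where tb: "valid_tiebreak tb"
    using valid_tiebreak_exists by blast
  let ?k = "m * m"
  let ?A = "clone_approvals ?k m" and ?C = "clone_candidates ?k m ?k"
  have m: "m \<le> ?k"
    using assms by simp
  interpret clone_run ?k m ?k tb ?k
    using assms m by (intro clone_run_intro[OF tb]) auto
  let ?W = "mes ?A ?C ?k tb ?k"
  have clones: "card (?W \<inter> {..<?k}) = m"
    using card_clone_part_eq_group m by simp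
  then have card_W: "card ?W = ?k"
    using card_committee_full_budget m by simp
  then have "?W \<in> av_completions ?A ?C ?k ?k (mes_vb ?A ?C ?k tb ?k)"
    unfolding mes_vb_eq_mes[OF card_W] using committee_subset
    by (intro self_av_completion finite_clone_candidates)
  then have out: "?W \<in> mes_vb_av_outputs ?A ?C ?k ?k"
    unfolding mes_vb_av_outputs_def using tb by blast
  have "sw ?A ?k ?W \<le> 2 * ?k"
    using sw_committee_full_budget clones by simp
  then have sw: "real (sw ?A ?k ?W) \<le> 2 * real ?k"
    using of_nat_le_iff[of "sw ?A ?k ?W" "2 * ?k", where 'a = real] by simp
  have max_sw: "real ?k * real m \<le> real (max_sw ?A ?C ?k ?k)"
    using max_sw_clones_ge[OF m, of ?k] by (simp only: of_nat_le_iff of_nat_mult[symmetric])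
  have "util_ratio ?A ?C ?k ?k ?W \<le> 2 * real ?k / (real ?k * real m)"
    unfolding util_ratio_def using sw max_sw assms by (intro frac_le) auto
  also have "\<dots> = 2 / sqrt (real ?k)"
    using assms by (simp add: real_sqrt_mult)
  finally have "util_ratio ?A ?C ?k ?k ?W \<le> 2 / sqrt (real ?k)" .
  moreover have "valid_instance ?A ?C ?k ?k"
    using assms m by (intro valid_instance_clone) auto
  moreover have "0 < real ?k * real m"
    using assms by simp
  then have "0 < max_sw ?A ?C ?k ?k"
    using max_sw by linarith
  ultimately show ?thesis
    using out by (intro exI[of _ ?A] exI[of _ ?C] exI[of _ ?k] exI[of _ ?W]) simp
qed

lemma infinite_if_squares:
  assumes "\<And>m. 2 \<le> m \<Longrightarrow> m * m \<in> S"
  shows "infinite (S :: nat set)"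
  unfolding infinite_nat_iff_unbounded_le
proof
  fix N :: nat
  have "N \<le> (N + 2) * (N + 2)" "(N + 2) * (N + 2) \<in> S"
    using assms[of "N + 2"] by simp_all
  then show "\<exists>k\<ge>N. k \<in> S"
    by blast
qed

theorem theorem9:
  shows "(\<forall>(A :: nat \<Rightarrow> 'c set) C n k W.
           valid_instance A C n k \<and> W \<in> mes_vb_av_outputs A C n k \<longrightarrow>
             (max_cov A C n k > 0 \<longrightarrow> repr_ratio A C n k W \<ge> 1 / real k) \<and>
             (max_sw A C n k > 0 \<longrightarrow> util_ratio A C n k W \<ge> 2 / sqrt (real k) - 2 / real k)) \<and>
         (\<exists>K :: real. K > 0 \<and>
           infinite {k :: nat.
             (\<exists>(A :: nat \<Rightarrow> nat set) C n W. valid_instance A C n k \<and> W \<in> mes_vb_av_outputs A C n k \<and>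
                 max_cov A C n k > 0 \<and> repr_ratio A C n k W \<le> K / real k) \<and>
             (\<exists>(A :: nat \<Rightarrow> nat set) C n W. valid_instance A C n k \<and> W \<in> mes_vb_av_outputs A C n k \<and>
                 max_sw A C n k > 0 \<and> util_ratio A C n k W \<le> K / sqrt (real k))})"
proof (intro conjI allI impI exI[of _ "2 :: real"] infinite_if_squares CollectI)
  fix A :: "nat \<Rightarrow> 'c set" and C n k W
  assume "valid_instance A C n k \<and> W \<in> mes_vb_av_outputs A C n k"
  then show "max_cov A C n k > 0 \<Longrightarrow> repr_ratio A C n k W \<ge> 1 / real k"
    and "max_sw A C n k > 0 \<Longrightarrow> util_ratio A C n k W \<ge> 2 / sqrt (real k) - 2 / real k"
    using mes_vb_av_guarantees by blast+
qed ((rule repr_lower_example, use le_square order_trans in blast)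
  | (rule util_lower_example, simp) | simp)+

end
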